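(* Let $f:\Omega\to\mathbb{R}$ and $\psi:\mathbb{R}^n\to\mathbb{R}$ be given, and let $v_h,w_h\in\mathbb{V}_h$ satisfy $\mathcal{G}_h[v_h](x_i)\ge\mathcal{G}_h[w_h](x_i)$ for all $x_i\in\mathcal{N}_h^0$. Then $v_h\ge w_h$ in $\Omega$.
   Context: Let $n\ge1$, $s\in(0,1)$, and let $\Omega\subset\mathbb{R}^n$ be a bounded polygonal/polyhedral Lipschitz domain satisfying the exterior ball condition, with a conforming simplicial triangulation $\mathcal{T}_h$. Let $x_1,\dots,x_N$ be the interior nodes (nodes not on $\partial\Omega$), $\mathcal{N}_h^0$ their set, $\delta_i=\mathrm{dist}(x_i,\partial\Omega)$, and $h_i$ the local mesh size at $x_i$. Let $\mathbb{V}_h=\{v\in C(\mathbb{R}^n): v|_T\text{ affine for all }T\in\mathcal{T}_h,\ v=0\text{ on }\Omega^c\}$. For each interior node $x_i$ fix $H_i>0$ (typically $H_i=h_i^{\alpha_i}\delta_i^{1-\alpha_i}$, $\alpha_i\in[0,1]$), a star-shaped domain $\Omega_i\subset\Omega$ centered at $x_i$ containing the points $x_i\pm H_ie_j$ (e.g. the cube $x_i+[-H_i,H_i]^n$) and satisfying the symmetry conditions of Han–Wu–Zhou's monotone discretization, and a constant $\kappa_{n,s,i}>0$. For $v\in\mathbb{V}_h$ define $$(-\Delta)^s_h[v](x_i):=-\kappa_{n,s,i}\frac{\Delta_{FD}v(x_i;H_i)}{H_i^{2s}}+\int_{\Omega_i^c}\frac{v(x_i)-v(y)}{|x_i-y|^{n+2s}}\,dy,\qquad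 \Delta_{FD}v(x_i;H_i)=\sum_{j=1}^n\big(v(x_i+H_ie_j)-2v(x_i)+v(x_i-H_ie_j)\big),$$ where $e_j$ are the coordinate unit vectors. Standing fact (discrete barrier function): the function $b_h\in\mathbb{V}_h$ with $b_h(x_i)=1$ for all interior nodes satisfies $(-\Delta)^s_h[b_h](x_i)\ge C\delta_i^{-2s}>0$ for all $x_i\in\mathcal{N}_h^0$, with $C>0$ depending only on $s$ and $\Omega$. The discrete obstacle operator is $$\mathcal{G}_h[v_h](x_i):=\min\{(-\Delta)^s_h[v_h](x_i)-f(x_i),\ v_h(x_i)-\psi(x_i)\},\quad x_i\in\mathcal{N}_h^0.$$ *)

theory Defs
  imports "HOL-Analysis.Analysis"
begin

text \<open>Bounded Lipschitz domain: locally, after a rigid motion, the region below the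
  graph of a Lipschitz function of the remaining coordinates (the function g does not
  depend on coordinate k).\<close>
definition lipschitz_domain :: "(real^'n) set \<Rightarrow> bool" where
  "lipschitz_domain \<Omega> \<longleftrightarrow> open \<Omega> \<and> connected \<Omega> \<and> bounded \<Omega> \<and>
     (\<forall>z\<in>frontier \<Omega>. \<exists>r>0. \<exists>(Q::real^'n \<Rightarrow> real^'n) (k::'n) (L::real) (g::real^'n \<Rightarrow> real).
        orthogonal_transformation Q \<and> L-lipschitz_on UNIV g \<and>
        (\<forall>(y::real^'n) (t::real). g (\<chi> i. if i = k then t else y $ i) = g y) \<and>
        (\<forall>x\<in>ball z r. x \<in> \<Omega> \<longleftrightarrow> (Q (x - z)) $ k < g (Q (x - z))))"

definition exterior_ball_condition :: "(real^'n) set \<Rightarrow> bool" where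
  "exterior_ball_condition \<Omega> \<longleftrightarrow>
     (\<exists>r>0. \<forall>z\<in>frontier \<Omega>. \<exists>c::real^'n. dist c z = r \<and> ball c r \<inter> \<Omega> = {})"

definition conforming_triangulation :: "(real^'n) set \<Rightarrow> (real^'n) set set \<Rightarrow> bool" where
  "conforming_triangulation \<Omega> \<T> \<longleftrightarrow> finite \<T> \<and>
     (\<forall>T\<in>\<T>. int CARD('n) simplex T) \<and>
     (\<forall>T\<in>\<T>. \<forall>T'\<in>\<T>. (T \<inter> T') face_of T \<and> (T \<inter> T') face_of T') \<and>
     \<Union>\<T> = closure \<Omega>"

definition mesh_nodes :: "(real^'n) set set \<Rightarrow> (real^'n) set" where
  "mesh_nodes \<T> = {x. \<exists>T\<in>\<T>. x extreme_point_of T}"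

definition interior_nodes :: "(real^'n) set \<Rightarrow> (real^'n) set set \<Rightarrow> (real^'n) set" where
  "interior_nodes \<Omega> \<T> = mesh_nodes \<T> - frontier \<Omega>"

definition Vh :: "(real^'n) set \<Rightarrow> (real^'n) set set \<Rightarrow> (real^'n \<Rightarrow> real) set" where
  "Vh \<Omega> \<T> = {v. continuous_on UNIV v \<and>
      (\<forall>T\<in>\<T>. \<exists>a c. \<forall>x\<in>T. v x = inner a x + c) \<and>
      (\<forall>x. x \<notin> \<Omega> \<longrightarrow> v x = 0)}"

definition reflect_coord :: "'n \<Rightarrow> real^'n \<Rightarrow> real^'n" where
  "reflect_coord k z = (\<chi> i. if i = k then - z $ i else z $ i)"

definition swap_coords :: "'n \<Rightarrow> 'n \<Rightarrow> real^'n \<Rightarrow> real^'n" where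
  "swap_coords a b z = (\<chi> i. z $ (if i = a then b else if i = b then a else i))"

definition admissible_local_data ::
  "(real^'n) set \<Rightarrow> (real^'n) set set \<Rightarrow> (real^'n \<Rightarrow> real) \<Rightarrow> (real^'n \<Rightarrow> real)
     \<Rightarrow> (real^'n \<Rightarrow> (real^'n) set) \<Rightarrow> bool" where
  "admissible_local_data \<Omega> \<T> H \<kappa> Om \<longleftrightarrow>
     (\<forall>x\<in>interior_nodes \<Omega> \<T>. H x > 0 \<and> \<kappa> x > 0 \<and>
        open (Om x) \<and> x \<in> Om x \<and> Om x \<subseteq> \<Omega> \<and>
        (\<forall>y\<in>Om x. closed_segment x y \<subseteq> Om x) \<and>
        (\<forall>j. x + H x *\<^sub>R axis j 1 \<in> Om x \<and> x - H x *\<^sub>R axis j 1 \<in> Om x) \<and>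
        (\<forall>z k. x + z \<in> Om x \<longrightarrow> x + reflect_coord k z \<in> Om x) \<and>
        (\<forall>z a b. x + z \<in> Om x \<longrightarrow> x + swap_coords a b z \<in> Om x))"

definition Delta_FD :: "(real^'n \<Rightarrow> real) \<Rightarrow> real^'n \<Rightarrow> real \<Rightarrow> real" where
  "Delta_FD v x h = (\<Sum>j\<in>UNIV. v (x + h *\<^sub>R axis j 1) - 2 * v x + v (x - h *\<^sub>R axis j 1))"

definition frac_lap_h ::
  "real \<Rightarrow> (real^'n \<Rightarrow> real) \<Rightarrow> (real^'n \<Rightarrow> real) \<Rightarrow> (real^'n \<Rightarrow> (real^'n) set)
     \<Rightarrow> (real^'n \<Rightarrow> real) \<Rightarrow> real^'n \<Rightarrow> real" where
  "frac_lap_h s \<kappa> H Om v x =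
     - \<kappa> x * Delta_FD v x (H x) / (H x) powr (2 * s)
     + (LINT y : - Om x | lebesgue. (v x - v y) / norm (x - y) powr (real CARD('n) + 2 * s))"

definition obstacle_op_h ::
  "real \<Rightarrow> (real^'n \<Rightarrow> real) \<Rightarrow> (real^'n \<Rightarrow> real) \<Rightarrow> (real^'n \<Rightarrow> (real^'n) set)
     \<Rightarrow> (real^'n \<Rightarrow> real) \<Rightarrow> (real^'n \<Rightarrow> real) \<Rightarrow> (real^'n \<Rightarrow> real) \<Rightarrow> real^'n \<Rightarrow> real" where
  "obstacle_op_h s \<kappa> H Om f \<psi> v x = min (frac_lap_h s \<kappa> H Om v x - f x) (v x - \<psi> x)"

end

theory Submission
  imports Defs
begin

text \<open>If w - v had a positive maximum, it would be attained at an interior node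
  where v < w; there the obstacle inequality forces the discrete fractional Laplacian
  of v to dominate that of w. Subtracting half the maximum times the discrete barrier
  gives a function that still attains its maximum at that node but has strictly negative
  discrete fractional Laplacian there, contradicting the monotonicity of the scheme: at a
  maximum both the finite difference part and the tail integral are nonnegative.\<close>

lemma dyadic_shell_exists:
  fixes r d :: real
  assumes "0 < r" "r \<le> d"
  shows "\<exists>k::nat. 2 ^ k * r \<le> d \<and> d < 2 ^ Suc k * r"
proof -
  define k where "k = nat \<lfloor>log 2 (d / r)\<rfloor>"
  have "0 \<le> log 2 (d / r)" using assms by simp
  then have "real k \<le> log 2 (d / r)" "log 2 (d / r) < real (Suc k)"
    unfolding k_def by linarith+
  then have "2 powr real k \<le> d / r" "d / r < 2 powr real (Suc k)"
    using assms by (simp_all add: le_log_iff log_less_iff)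
  moreover have "2 powr real (Suc k) = 2 ^ Suc k" "2 powr real k = 2 ^ k"
    by (simp_all only: powr_realpow zero_less_numeral)
  ultimately show ?thesis
    using assms by (intro exI[of _ k]) (simp add: field_simps del: power_Suc of_nat_Suc)
qed

lemma norm_powr_le_dyadic_sum:
  fixes x y :: "'a::euclidean_space" and r p :: real
  assumes "0 < r" "0 \<le> p"
  shows "ennreal (indicator {y. r \<le> norm (x - y)} y * norm (x - y) powr (-p))
    \<le> (\<Sum>k. ennreal ((2 ^ k * r) powr (-p)) * indicator (ball x (2 ^ Suc k * r)) y)"
proof (cases "r \<le> norm (x - y)")
  case True
  then obtain k :: nat where k: "2 ^ k * r \<le> norm (x - y)" "norm (x - y) < 2 ^ Suc k * r"
    using dyadic_shell_exists assms(1) by blast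
  let ?F = "\<lambda>k. ennreal ((2 ^ k * r) powr (-p)) * indicator (ball x (2 ^ Suc k * r)) y"
  have "norm (x - y) powr (-p) \<le> (2 ^ k * r) powr (-p)"
    using k(1) assms by (intro powr_mono2') auto
  then have "ennreal (indicator {y. r \<le> norm (x - y)} y * norm (x - y) powr (-p)) \<le> ?F k"
    using True k(2) by (simp add: dist_norm ennreal_leI)
  also have "\<dots> = sum ?F {k}"
    by (simp only: sum.insert finite.emptyI empty_iff not_False_eq_True sum.empty add_0_right)
  also have "\<dots> \<le> suminf ?F"
    by (intro sum_le_suminf summableI) auto
  finally show ?thesis .
qed simp

lemma dyadic_shell_weight:
  fixes r p :: real
  assumes "0 < r"
  shows "(2 ^ k * r) powr (-p) * (2 ^ Suc k * r) ^ n
    = 2 ^ n * r powr (real n - p) * (2 powr (real n - p)) ^ k"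
proof -
  have "(2 ^ k * r) powr (-p) = 2 powr (- (real k * p)) * r powr (-p)"
    using assms by (simp add: powr_mult powr_realpow[symmetric] powr_powr)
  moreover have "(2 ^ Suc k * r) ^ n = 2 powr (real n * real k) * 2 ^ n * r powr real n"
    using assms by (simp add: power_mult_distrib powr_realpow power_mult[symmetric]
        powr_powr[symmetric] mult.commute)
  moreover have "(2 powr (real n - p)) ^ k = 2 powr (- (real k * p)) * 2 powr (real n * real k)"
    by (simp add: powr_realpow[symmetric] powr_powr powr_add[symmetric] algebra_simps)
  moreover have "r powr (real n - p) = r powr (-p) * r powr real n"
    by (simp add: powr_add[symmetric])
  ultimately show ?thesis by (simp add: algebra_simps)
qed

text \<open>On the dyadic shell 2^k r \<le> |x - y| < 2^(k+1) r the kernel is at most (2^k r)^(-p),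
  while the shell lies in a ball of volume O((2^k r)^n): the integral is dominated by a
  geometric series of ratio 2^(n - p).\<close>
lemma integrable_norm_powr_outside_ball:
  fixes x :: "'a::euclidean_space" and r p :: real
  assumes "0 < r" "real DIM('a) < p"
  shows "integrable lebesgue (\<lambda>y. indicator {y. r \<le> norm (x - y)} y * norm (x - y) powr (-p))"
proof (rule integrableI_nonneg)
  define q where "q = 2 powr (real DIM('a) - p)"
  define A where "A = 2 ^ DIM('a) * r powr (real DIM('a) - p)"
  have p_nonneg: "0 \<le> p" using assms(2) by linarith
  have q: "0 < q" "q < 1"
    using assms(2) by (auto simp: q_def powr_less_one)
  show "(\<lambda>y. indicator {y. r \<le> norm (x - y)} y * norm (x - y) powr (-p)) \<in> borel_measurable lebesgue"
    by (rule measurable_completion) (simp add: measurable_lborel2)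
  show "AE y in lebesgue. 0 \<le> indicator {y. r \<le> norm (x - y)} y * norm (x - y) powr (-p)"
    by simp
  have "(\<integral>\<^sup>+y. ennreal (indicator {y. r \<le> norm (x - y)} y * norm (x - y) powr (-p)) \<partial>lebesgue)
      \<le> (\<integral>\<^sup>+y. (\<Sum>k. ennreal ((2 ^ k * r) powr (-p)) * indicator (ball x (2 ^ Suc k * r)) y) \<partial>lebesgue)"
    using assms(1) p_nonneg by (intro nn_integral_mono norm_powr_le_dyadic_sum)
  also have "\<dots> = (\<Sum>k. ennreal ((2 ^ k * r) powr (-p)) * emeasure lebesgue (ball x (2 ^ Suc k * r)))"
  proof (subst nn_integral_suminf)
    show "(\<lambda>y. ennreal ((2 ^ k * r) powr (-p)) * indicator (ball x (2 ^ Suc k * r)) y)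
        \<in> borel_measurable lebesgue" for k :: nat
      by (intro measurable_completion borel_measurable_times_ennreal borel_measurable_const
          borel_measurable_indicator) simp
  qed (simp add: nn_integral_cmult_indicator)
  also have "\<dots> = (\<Sum>k. ennreal (A * q ^ k) * emeasure lebesgue (ball (0::'a) 1))"
  proof (rule suminf_cong)
    fix k :: nat
    have "ennreal (A * q ^ k) = ennreal ((2 ^ k * r) powr (-p)) * ennreal ((2 ^ Suc k * r) ^ DIM('a))"
      using assms(1) by (simp add: A_def q_def dyadic_shell_weight ennreal_mult[symmetric] del: power_Suc)
    moreover have "emeasure lebesgue (ball x (2 ^ Suc k * r))
        = ennreal ((2 ^ Suc k * r) ^ DIM('a)) * emeasure lebesgue (ball (0::'a) 1)"
      using assms(1) by (intro emeasure_lebesgue_ball_conv_unit_ball) simp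
    ultimately show "ennreal ((2 ^ k * r) powr (-p)) * emeasure lebesgue (ball x (2 ^ Suc k * r))
        = ennreal (A * q ^ k) * emeasure lebesgue (ball (0::'a) 1)"
      by (simp add: mult.assoc)
  qed
  also have "\<dots> = (\<Sum>k. ennreal (A * q ^ k)) * emeasure lebesgue (ball (0::'a) 1)"
    by (simp add: ennreal_suminf_cmult mult.commute)
  also have "(\<Sum>k. ennreal (A * q ^ k)) = ennreal (A * (1 / (1 - q)))"
    using q assms(1) by (intro suminf_ennreal_eq sums_mult geometric_sums) (auto simp: A_def)
  also have "ennreal (A * (1 / (1 - q))) * emeasure lebesgue (ball (0::'a) 1) < \<infinity>"
    using emeasure_lborel_ball_finite[of "0::'a" 1] by (simp add: ennreal_mult_less_top)
  finally show "(\<integral>\<^sup>+y. ennreal (indicator {y. r \<le> norm (x - y)} y * norm (x - y) powr (-p)) \<partial>lebesgue) < \<infinity>" .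
qed

lemma Vh_continuous: "u \<in> Vh \<Omega> \<T> \<Longrightarrow> continuous_on UNIV u"
  unfolding Vh_def by simp

lemma Vh_affine_on: "u \<in> Vh \<Omega> \<T> \<Longrightarrow> T \<in> \<T> \<Longrightarrow> \<exists>a c. \<forall>x\<in>T. u x = inner a x + c"
  unfolding Vh_def by simp

lemma Vh_zero_outside: "u \<in> Vh \<Omega> \<T> \<Longrightarrow> x \<notin> \<Omega> \<Longrightarrow> u x = 0"
  unfolding Vh_def by simp

lemma Vh_diff:
  assumes "u \<in> Vh \<Omega> \<T>" "v \<in> Vh \<Omega> \<T>"
  shows "(\<lambda>y. u y - v y) \<in> Vh \<Omega> \<T>"
proof -
  have "\<exists>a c. \<forall>x\<in>T. u x - v x = inner a x + c" if T: "T \<in> \<T>" for T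
  proof -
    obtain a c a' c' where "\<forall>x\<in>T. u x = inner a x + c" "\<forall>x\<in>T. v x = inner a' x + c'"
      using Vh_affine_on[OF assms(1) T] Vh_affine_on[OF assms(2) T] by blast
    then show ?thesis by (intro exI[of _ "a - a'"] exI[of _ "c - c'"]) (simp add: inner_diff_left)
  qed
  moreover have "continuous_on UNIV (\<lambda>y. u y - v y)"
    using assms by (intro continuous_on_diff Vh_continuous)
  ultimately show ?thesis using assms by (simp add: Vh_def)
qed

lemma Vh_cmult:
  assumes "u \<in> Vh \<Omega> \<T>"
  shows "(\<lambda>y. c * u y) \<in> Vh \<Omega> \<T>"
proof -
  have "\<exists>a d. \<forall>x\<in>T. c * u x = inner a x + d" if T: "T \<in> \<T>" for T
  proof -
    obtain a d where "\<forall>x\<in>T. u x = inner a x + d"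
      using Vh_affine_on[OF assms T] by blast
    then show ?thesis
      by (intro exI[of _ "c *\<^sub>R a"] exI[of _ "c * d"]) (simp add: distrib_left)
  qed
  moreover have "continuous_on UNIV (\<lambda>y. c * u y)"
    using assms by (intro continuous_on_mult continuous_on_const Vh_continuous)
  ultimately show ?thesis using assms by (simp add: Vh_def)
qed

lemma Vh_bounded:
  assumes "u \<in> Vh \<Omega> \<T>" "bounded \<Omega>"
  obtains B where "0 \<le> B" "\<And>y. \<bar>u y\<bar> \<le> B"
proof -
  have "compact (u ` closure \<Omega>)"
    using assms continuous_on_subset[OF Vh_continuous[OF assms(1)]]
    by (intro compact_continuous_image) simp_all
  then obtain B where "\<forall>z\<in>u ` closure \<Omega>. norm z \<le> B"
    using compact_imp_bounded bounded_iff by blast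
  then have B: "\<And>y. y \<in> closure \<Omega> \<Longrightarrow> \<bar>u y\<bar> \<le> B" by simp
  have bound: "\<bar>u y\<bar> \<le> max B 0" for y
  proof (cases "y \<in> \<Omega>")
    case True
    then have "\<bar>u y\<bar> \<le> B" using B closure_subset by blast
    then show ?thesis by simp
  qed (simp add: Vh_zero_outside[OF assms(1)])
  show ?thesis by (rule that[of "max B 0"]) (simp_all add: bound)
qed

lemma conforming_triangulation_simplex:
  "conforming_triangulation \<Omega> \<T> \<Longrightarrow> T \<in> \<T> \<Longrightarrow>
    \<exists>C. finite C \<and> \<not> affine_dependent C \<and> T = convex hull C"
  unfolding conforming_triangulation_def simplex_def
  using aff_independent_finite by blast

lemma conforming_triangulation_Union:
  "conforming_triangulation \<Omega> \<T> \<Longrightarrow> \<Union>\<T> = closure \<Omega>"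
  unfolding conforming_triangulation_def by simp

lemma mesh_nodes_finite:
  assumes "conforming_triangulation \<Omega> \<T>"
  shows "finite (mesh_nodes \<T>)"
proof -
  have "finite {x. x extreme_point_of T}" if T: "T \<in> \<T>" for T
  proof -
    obtain C where "finite C" "T = convex hull C"
      using conforming_triangulation_simplex[OF assms T] by blast
    then show ?thesis
      using extreme_point_of_convex_hull finite_subset[of _ C] by (metis mem_Collect_eq subsetI)
  qed
  moreover have "mesh_nodes \<T> = (\<Union>T\<in>\<T>. {x. x extreme_point_of T})"
    by (auto simp: mesh_nodes_def)
  ultimately show ?thesis
    using assms by (simp add: conforming_triangulation_def)
qed

lemma interior_nodes_subset:
  assumes "open \<Omega>" "conforming_triangulation \<Omega> \<T>"
  shows "interior_nodes \<Omega> \<T> \<subseteq> \<Omega>"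
proof
  fix x assume x: "x \<in> interior_nodes \<Omega> \<T>"
  then have "x \<in> \<Union>\<T>"
    by (auto simp: interior_nodes_def mesh_nodes_def extreme_point_of_def)
  then have "x \<in> closure \<Omega>"
    using conforming_triangulation_Union[OF assms(2)] by simp
  with x assms(1) show "x \<in> \<Omega>"
    by (simp add: interior_nodes_def frontier_def interior_open)
qed

text \<open>Vertices on the boundary carry the value 0, whence the hypothesis 0 \<le> m.\<close>
lemma Vh_le_of_interior_nodes_le:
  assumes "open \<Omega>" "conforming_triangulation \<Omega> \<T>" "u \<in> Vh \<Omega> \<T>" "0 \<le> m"
    and nodes: "\<And>z. z \<in> interior_nodes \<Omega> \<T> \<Longrightarrow> u z \<le> m"
  shows "u y \<le> m"
proof (cases "y \<in> \<Omega>")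
  case True
  then have "y \<in> \<Union>\<T>"
    using True closure_subset[of \<Omega>] conforming_triangulation_Union[OF assms(2)] by auto
  then obtain T where T: "T \<in> \<T>" "y \<in> T" by blast
  obtain C where C: "\<not> affine_dependent C" "T = convex hull C"
    using conforming_triangulation_simplex[OF assms(2) T(1)] by blast
  obtain a c where affine: "\<forall>x\<in>T. u x = inner a x + c"
    using Vh_affine_on[OF assms(3) T(1)] by blast
  have "C \<subseteq> {x. inner a x \<le> m - c}"
  proof
    fix z assume z: "z \<in> C"
    then have "z \<in> mesh_nodes \<T>"
      using T(1) C extreme_point_of_convex_hull_affine_independent by (auto simp: mesh_nodes_def)
    have "u z \<le> m"
    proof (cases "z \<in> frontier \<Omega>")
      case True
      then have "z \<notin> \<Omega>" using frontier_disjoint_eq[of \<Omega>] assms(1) by blast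
      then show ?thesis using Vh_zero_outside[OF assms(3)] assms(4) by simp
    qed (use nodes \<open>z \<in> mesh_nodes \<T>\<close> in \<open>simp add: interior_nodes_def\<close>)
    moreover have "u z = inner a z + c"
      using affine hull_inc[OF z] C(2) by simp
    ultimately show "z \<in> {x. inner a x \<le> m - c}" by simp
  qed
  then have "T \<subseteq> {x. inner a x \<le> m - c}"
    unfolding C(2) by (intro hull_minimal convex_halfspace_le)
  then have "inner a y \<le> m - c" using T(2) by blast
  then show ?thesis using affine T(2) by simp
qed (simp add: Vh_zero_outside[OF assms(3)] assms(4))

lemma set_integrable_frac_lap_tail:
  fixes u :: "real^'n \<Rightarrow> real"
  assumes "u \<in> Vh \<Omega> \<T>" "bounded \<Omega>" "open U" "x \<in> U" "real CARD('n) < p"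
  shows "set_integrable lebesgue (- U) (\<lambda>y. (u x - u y) / norm (x - y) powr p)"
proof -
  obtain B where B: "0 \<le> B" "\<And>y. \<bar>u y\<bar> \<le> B" using Vh_bounded[OF assms(1,2)] by blast
  obtain r where r: "0 < r" "ball x r \<subseteq> U" using assms(3,4) open_contains_ball by blast
  have kernel: "integrable lebesgue
      (\<lambda>y. 2 * B * (indicator {y. r \<le> norm (x - y)} y * norm (x - y) powr (-p)))"
    using integrable_norm_powr_outside_ball[OF r(1), of p x] assms(5) by simp
  note [measurable] = borel_measurable_continuous_onI[OF Vh_continuous[OF assms(1)]]
  have [measurable]: "- U \<in> sets borel" using assms(3) by (simp add: borel_closed closed_Compl)
  have bound: "norm (indicator (- U) y *\<^sub>R ((u x - u y) / norm (x - y) powr p))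
      \<le> norm (2 * B * (indicator {y. r \<le> norm (x - y)} y * norm (x - y) powr (-p)))" for y
  proof (cases "y \<in> U")
    case False
    then have far: "r \<le> norm (x - y)" using r(2) by (force simp: dist_norm)
    have "\<bar>u x - u y\<bar> \<le> 2 * B" using B(2)[of x] B(2)[of y] by linarith
    then have "\<bar>u x - u y\<bar> / norm (x - y) powr p \<le> 2 * B / norm (x - y) powr p"
      by (intro divide_right_mono) auto
    then show ?thesis using False far B(1) by (simp add: abs_mult powr_minus_divide abs_divide)
  qed simp
  show ?thesis
    unfolding set_integrable_def
  proof (rule Bochner_Integration.integrable_bound[OF kernel])
    show "(\<lambda>y. indicator (- U) y *\<^sub>R ((u x - u y) / norm (x - y) powr p)) \<in> borel_measurable lebesgue"
      by (rule measurable_completion, subst measurable_lborel2) measurable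
  qed (intro AE_I2 bound)
qed

lemma Delta_FD_diff: "Delta_FD (\<lambda>y. u y - v y) x h = Delta_FD u x h - Delta_FD v x h"
  unfolding Delta_FD_def sum_subtractf[symmetric] by (rule sum.cong) auto

lemma Delta_FD_cmult: "Delta_FD (\<lambda>y. c * u y) x h = c * Delta_FD u x h"
  unfolding Delta_FD_def sum_distrib_left by (rule sum.cong) (auto simp: algebra_simps)

lemma frac_lap_h_diff:
  fixes u v :: "real^'n \<Rightarrow> real"
  assumes "set_integrable lebesgue (- Om x) (\<lambda>y. (u x - u y) / norm (x - y) powr (real CARD('n) + 2 * s))"
    and "set_integrable lebesgue (- Om x) (\<lambda>y. (v x - v y) / norm (x - y) powr (real CARD('n) + 2 * s))"
  shows "frac_lap_h s \<kappa> H Om (\<lambda>y. u y - v y) x = frac_lap_h s \<kappa> H Om u x - frac_lap_h s \<kappa> H Om v x"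
proof -
  have "(\<lambda>y. ((u x - v x) - (u y - v y)) / norm (x - y) powr (real CARD('n) + 2 * s))
      = (\<lambda>y. (u x - u y) / norm (x - y) powr (real CARD('n) + 2 * s)
           - (v x - v y) / norm (x - y) powr (real CARD('n) + 2 * s))"
    by (simp add: fun_eq_iff diff_divide_distrib)
  then show ?thesis
    using set_integral_diff(2)[OF assms]
    by (simp add: frac_lap_h_def Delta_FD_diff diff_divide_distrib algebra_simps)
qed

lemma admissible_local_data_at:
  assumes "admissible_local_data \<Omega> \<T> H \<kappa> Om" "x \<in> interior_nodes \<Omega> \<T>"
  shows "0 < \<kappa> x" "open (Om x)" "x \<in> Om x"
  using assms unfolding admissible_local_data_def by blast+

lemma frac_lap_h_diff_Vh:
  fixes u v :: "real^'n \<Rightarrow> real"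
  assumes "bounded \<Omega>" "admissible_local_data \<Omega> \<T> H \<kappa> Om" "0 < s" "x \<in> interior_nodes \<Omega> \<T>"
    and "u \<in> Vh \<Omega> \<T>" "v \<in> Vh \<Omega> \<T>"
  shows "frac_lap_h s \<kappa> H Om (\<lambda>y. u y - v y) x = frac_lap_h s \<kappa> H Om u x - frac_lap_h s \<kappa> H Om v x"
  using admissible_local_data_at(2,3)[OF assms(2,4)] assms(1,3,5,6)
  by (intro frac_lap_h_diff set_integrable_frac_lap_tail) auto

lemma frac_lap_h_cmult:
  fixes u :: "real^'n \<Rightarrow> real"
  shows "frac_lap_h s \<kappa> H Om (\<lambda>y. c * u y) x = c * frac_lap_h s \<kappa> H Om u x"
proof -
  have "(\<lambda>y. (c * u x - c * u y) / norm (x - y) powr (real CARD('n) + 2 * s))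
      = (\<lambda>y. c * ((u x - u y) / norm (x - y) powr (real CARD('n) + 2 * s)))"
    by (simp add: fun_eq_iff right_diff_distrib)
  then have "(LINT y : - Om x | lebesgue. (c * u x - c * u y) / norm (x - y) powr (real CARD('n) + 2 * s))
      = c * (LINT y : - Om x | lebesgue. (u x - u y) / norm (x - y) powr (real CARD('n) + 2 * s))"
    by (simp only: set_integral_mult_right)
  then show ?thesis
    unfolding frac_lap_h_def Delta_FD_cmult by (simp add: algebra_simps)
qed

lemma frac_lap_h_nonneg_at_max:
  fixes u :: "real^'n \<Rightarrow> real"
  assumes "\<And>y. u y \<le> u x" "0 < \<kappa> x"
  shows "0 \<le> frac_lap_h s \<kappa> H Om u x"
proof -
  have "u (x + H x *\<^sub>R axis j 1) - 2 * u x + u (x - H x *\<^sub>R axis j 1) \<le> 0" for j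
    using assms(1)[of "x + H x *\<^sub>R axis j 1"] assms(1)[of "x - H x *\<^sub>R axis j 1"] by linarith
  then have "Delta_FD u x (H x) \<le> 0"
    unfolding Delta_FD_def by (intro sum_nonpos)
  then have "0 \<le> - \<kappa> x * Delta_FD u x (H x) / H x powr (2 * s)"
    using assms(2) by (intro divide_nonneg_nonneg) (auto simp: mult_nonneg_nonpos)
  moreover have "0 \<le> (LINT y : - Om x | lebesgue. (u x - u y) / norm (x - y) powr (real CARD('n) + 2 * s))"
    using assms(1) unfolding set_lebesgue_integral_def
    by (intro Bochner_Integration.integral_nonneg) (simp add: indicator_def)
  ultimately show ?thesis unfolding frac_lap_h_def by linarith
qed

lemma frac_lap_h_le_of_obstacle_op_h_le:
  assumes "obstacle_op_h s \<kappa> H Om f \<psi> w x \<le> obstacle_op_h s \<kappa> H Om f \<psi> v x" "v x < w x"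
  shows "frac_lap_h s \<kappa> H Om w x \<le> frac_lap_h s \<kappa> H Om v x"
  using assms unfolding obstacle_op_h_def by linarith

lemma infdist_frontier_pos:
  fixes \<Omega> :: "'a::{real_normed_vector, perfect_space} set"
  assumes "open \<Omega>" "bounded \<Omega>" "x \<in> \<Omega>"
  shows "0 < infdist x (frontier \<Omega>)"
proof -
  have "\<Omega> \<noteq> UNIV" using assms(2) not_bounded_UNIV by blast
  then have "frontier \<Omega> \<noteq> {}"
    using assms(3) frontier_not_empty by blast
  moreover have "x \<notin> frontier \<Omega>"
    using assms(1,3) frontier_disjoint_eq[of \<Omega>] by blast
  ultimately have "infdist x (frontier \<Omega>) \<noteq> 0"
    using in_closed_iff_infdist_zero[OF frontier_closed] by blast
  then show ?thesis using infdist_nonneg[of x] by (simp add: order_less_le)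
qed

lemma Vh_nonpos_of_frac_lap_h_nonpos:
  fixes e b :: "real^'n \<Rightarrow> real"
  assumes "open \<Omega>" "bounded \<Omega>" "conforming_triangulation \<Omega> \<T>"
    and local_data: "admissible_local_data \<Omega> \<T> H \<kappa> Om" and "0 < s"
    and barrier: "b \<in> Vh \<Omega> \<T>" "\<And>x. x \<in> interior_nodes \<Omega> \<T> \<Longrightarrow> b x = 1"
      "\<And>x. x \<in> interior_nodes \<Omega> \<T> \<Longrightarrow> 0 < frac_lap_h s \<kappa> H Om b x"
    and e: "e \<in> Vh \<Omega> \<T>"
      "\<And>x. x \<in> interior_nodes \<Omega> \<T> \<Longrightarrow> 0 < e x \<Longrightarrow> frac_lap_h s \<kappa> H Om e x \<le> 0"
  shows "e y \<le> 0"
proof (rule ccontr)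
  assume "\<not> e y \<le> 0"
  let ?N = "interior_nodes \<Omega> \<T>"
  let ?L = "frac_lap_h s \<kappa> H Om"
  have finite: "finite ?N"
    using mesh_nodes_finite[OF assms(3)] by (simp add: interior_nodes_def)
  obtain z where z: "z \<in> ?N" "0 < e z"
    using Vh_le_of_interior_nodes_le[OF assms(1,3) e(1) order_refl] \<open>\<not> e y \<le> 0\<close>
    by (meson not_le)
  have "Max (e ` ?N) \<in> e ` ?N"
    using finite z(1) by (intro Max_in) auto
  then obtain x where x: "x \<in> ?N" "e x = Max (e ` ?N)"
    by (metis imageE)
  have max: "e z' \<le> e x" if "z' \<in> ?N" for z'
    using x(2) finite that by simp
  have "0 < e x" using max[OF z(1)] z(2) by simp
  define u where "u y = e y - e x / 2 * b y" for y
  have u: "u \<in> Vh \<Omega> \<T>"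
    unfolding u_def using e(1) barrier(1) by (intro Vh_diff Vh_cmult)
  have nodes: "u z' \<le> e x / 2" if "z' \<in> ?N" for z'
    using max[OF that] barrier(2)[OF that] by (simp add: u_def)
  have "u z \<le> e x / 2" for z
    by (rule Vh_le_of_interior_nodes_le[OF assms(1,3) u _ nodes]) (use \<open>0 < e x\<close> in simp)
  then have u_max: "u z \<le> u x" for z
    using x(1) barrier(2) by (simp add: u_def)
  have "0 \<le> ?L u x"
    using u_max admissible_local_data_at(1)[OF local_data x(1)] by (rule frac_lap_h_nonneg_at_max)
  also have "?L u x = ?L e x - ?L (\<lambda>y. e x / 2 * b y) x"
    unfolding u_def by (rule frac_lap_h_diff_Vh[OF assms(2) local_data assms(5) x(1) e(1) Vh_cmult[OF barrier(1)]])
  also have "\<dots> = ?L e x - e x / 2 * ?L b x"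
    by (simp only: frac_lap_h_cmult)
  also have "\<dots> < 0"
    using e(2)[OF x(1) \<open>0 < e x\<close>] mult_pos_pos[OF half_gt_zero[OF \<open>0 < e x\<close>] barrier(3)[OF x(1)]]
    by linarith
  finally show False by simp
qed

theorem lemma3p5:
  fixes \<Omega> :: "(real^'n) set" and \<T> :: "(real^'n) set set" and s :: real
    and H \<kappa> :: "real^'n \<Rightarrow> real" and Om :: "real^'n \<Rightarrow> (real^'n) set"
    and f \<psi> v w :: "real^'n \<Rightarrow> real"
  assumes "0 < s" "s < 1"
    and "lipschitz_domain \<Omega>" "exterior_ball_condition \<Omega>"
    and "conforming_triangulation \<Omega> \<T>"
    and "admissible_local_data \<Omega> \<T> H \<kappa> Om"
    and barrier: "\<exists>b\<in>Vh \<Omega> \<T>. (\<forall>x\<in>interior_nodes \<Omega> \<T>. b x = 1) \<and>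
        (\<exists>C>0. \<forall>x\<in>interior_nodes \<Omega> \<T>.
           frac_lap_h s \<kappa> H Om b x \<ge> C * infdist x (frontier \<Omega>) powr (- 2 * s))"
    and "v \<in> Vh \<Omega> \<T>" "w \<in> Vh \<Omega> \<T>"
    and "\<forall>x\<in>interior_nodes \<Omega> \<T>.
           obstacle_op_h s \<kappa> H Om f \<psi> v x \<ge> obstacle_op_h s \<kappa> H Om f \<psi> w x"
  shows "\<forall>x\<in>\<Omega>. v x \<ge> w x"
proof
  txt \<open>The hypotheses s < 1 and the exterior ball condition enter only through the barrier,
    which is assumed.\<close>
  fix y assume "y \<in> \<Omega>"
  have \<Omega>: "open \<Omega>" "bounded \<Omega>"
    using assms(3) by (simp_all add: lipschitz_domain_def)
  obtain b C where b: "b \<in> Vh \<Omega> \<T>" "\<And>x. x \<in> interior_nodes \<Omega> \<T> \<Longrightarrow> b x = 1" "0 < C"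
    "\<And>x. x \<in> interior_nodes \<Omega> \<T> \<Longrightarrow> C * infdist x (frontier \<Omega>) powr (- 2 * s) \<le> frac_lap_h s \<kappa> H Om b x"
    using barrier by blast
  have "0 < frac_lap_h s \<kappa> H Om b x" if x: "x \<in> interior_nodes \<Omega> \<T>" for x
  proof -
    have "0 < infdist x (frontier \<Omega>) powr (- 2 * s)"
      using infdist_frontier_pos[OF \<Omega> subsetD[OF interior_nodes_subset[OF \<Omega>(1) assms(5)] x]]
      by simp
    then show ?thesis
      using b(3) b(4)[OF x] by (meson mult_pos_pos order_less_le_trans)
  qed
  moreover have "frac_lap_h s \<kappa> H Om (\<lambda>y. w y - v y) x \<le> 0"
    if x: "x \<in> interior_nodes \<Omega> \<T>" "0 < w x - v x" for x
    using frac_lap_h_diff_Vh[OF \<Omega>(2) assms(6,1) x(1) assms(9,8)] assms(10) x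
      frac_lap_h_le_of_obstacle_op_h_le[of s \<kappa> H Om f \<psi> w x v] by simp
  ultimately have "w y - v y \<le> 0"
    using Vh_nonpos_of_frac_lap_h_nonpos[OF \<Omega> assms(5,6,1) b(1,2)] Vh_diff[OF assms(9,8)] by blast
  then show "w y \<le> v y" by simp
qed

end
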